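(* Let $D$ be a set (the input domain) and consider a multi-task model consisting of three conditional probability distributions $\mathcal{P}^1(y\mid \vec{x}),\mathcal{P}^2(y\mid \vec{x}),\mathcal{P}^3(y\mid \vec{x})$ on labels $y\in\{-1,+1\}$, for $\vec{x}\in D$, which encodes the bias $$\mathcal{P}^1(+1\mid \vec{x})+\mathcal{P}^2(+1\mid \vec{x})+\mathcal{P}^3(+1\mid \vec{x})=\tfrac{3}{2}\quad\text{for all }\vec{x}\in D.$$ Let $V=\{(\mathcal{P}^1(+1\mid\vec{x}),\mathcal{P}^2(+1\mid\vec{x}),\mathcal{P}^3(+1\mid\vec{x})) : \vec{x}\in D\}\subset[0,1]^3$. Let $\vec{v}_1=(1,0,\tfrac12)$, $\vec{v}_2=(0,1,\tfrac12)$, $\vec{v}_3=(\tfrac12,1,0)$, $\vec{v}_4=(\tfrac12,0,1)$, $\vec{v}_5=(0,\tfrac12,1)$, $\vec{v}_6=(1,\tfrac12,0)$, and for $0<\eta<1$ let $\vec{u}_i(\eta)=\eta\vec{v}_i+(1-\eta)(\tfrac12,\tfrac12,\tfrac12)$, $i=1,\dots,6$. Let $V_{2/3}$ be the convex hull of $\vec{u}_1(2/3),\dots,\vec{u}_6(2/3)$. If $V_{2/3}$ is strictly contained in the convex hull of $V$, in the sense that $V_{2/3}$ lies in the relative interior of $\mathrm{conv}(V)$ within the plane $\{z\in\mathbb{R}^3: z_1+z_2+z_3=\tfrac32\}$ (equivalently, $\mathrm{conv}(V)$ contains $\vec{u}_1(\eta),\dots,\vec{u}_6(\eta)$ for some $\eta>\tfrac23$),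 then the multi-task model is contextual, i.e. its operational scenario admits no noncontextual ontological model.
   Context: Operational scenario of the multi-task model: preparations $\mathbf{S}_{\vec{x}}$, one for each $\vec{x}\in D$; effects $\mathbf{E}^k_y$ ($k=1,2,3$, $y=\pm1$), a trivial effect $\Omega$ and a null effect $\emptyset$; operational statistics $P(\mathbf{E}^k_y\mid\mathbf{S}_{\vec{x}})=\mathcal{P}^k(y\mid\vec{x})$, $P(\Omega\mid\mathbf{S})=1$, $P(\emptyset\mid\mathbf{S})=0$. Preparation densities are finite convex combinations $s=\sum_j p_j\mathbf{S}_j$ of preparations, and effect densities are finite convex combinations $e=\sum_j q_j\mathbf{E}_j$ of effects; statistics are extended bilinearly, $P(e\mid s)=\sum_{j,l}q_l p_j P(\mathbf{E}_l\mid\mathbf{S}_j)$. Two preparation densities $s_1,s_2$ are operationally equivalent ($s_1\sim s_2$) iff $P(\mathbf{E}\mid s_1)=P(\mathbf{E}\mid s_2)$ for all effects $\mathbf{E}$; two effect densities $e_1,e_2$ are operationally equivalent iff $P(e_1\mid\mathbf{S})=P(e_2\mid\mathbf{S})$ for all preparations $\mathbf{S}$. An ontological model consists of a measure space $\Lambda$ of ontic states, a probability density $\mu_{\mathbf{S}}$ on $\Lambda$ for each preparation and a measurable response function $\xi_{\mathbf{E}}:\Lambda\to[0,1]$ for each effect, with $\xi_\Omega\equiv1$, $\xi_\emptyset\equiv0$, extended linearly to densities ($\mu_{\sum p_j\mathbf{S}_j}=\sum p_j\mu_{\mathbf{S}_j}$, $\xi_{\sum q_j\mathbf{E}_j}=\sum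 q_j\xi_{\mathbf{E}_j}$), such that $P(\mathbf{E}\mid\mathbf{S})=\int_\Lambda\mu_{\mathbf{S}}(\lambda)\xi_{\mathbf{E}}(\lambda)\,d\lambda$ for all preparations and effects. It is noncontextual if operationally equivalent preparation densities have identical distributions $\mu$ (for all $\lambda$) and operationally equivalent effect densities have identical response functions $\xi$. The multi-task model is noncontextual iff such a noncontextual ontological model exists, and contextual otherwise. *)

theory Defs
  imports "HOL-Analysis.Analysis"
begin

datatype task = T1 | T2 | T3
datatype label = Pos | Neg

datatype effect = E task label | Omega | NullEff

lemma UNIV_task: "(UNIV :: task set) = {T1, T2, T3}"
  using task.exhaust by blast

lemma UNIV_label: "(UNIV :: label set) = {Pos, Neg}"
  using label.exhaust by blast

lemma UNIV_effect:
  "(UNIV :: effect set) = {Omega, NullEff} \<union> (\<lambda>(k, y). E k y) ` (UNIV \<times> UNIV)"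
  by (auto intro: effect.exhaust) (metis effect.exhaust image_iff iso_tuple_UNIV_I case_prod_conv)

instance effect :: finite
proof
  show "finite (UNIV :: effect set)"
    unfolding UNIV_effect UNIV_task UNIV_label by simp
qed

definition multitask_model :: "(task \<Rightarrow> label \<Rightarrow> 'd \<Rightarrow> real) \<Rightarrow> bool" where
  "multitask_model P \<longleftrightarrow> (\<forall>k x. P k Pos x \<ge> 0 \<and> P k Neg x \<ge> 0 \<and> P k Pos x + P k Neg x = 1)"

fun opstat :: "(task \<Rightarrow> label \<Rightarrow> 'd \<Rightarrow> real) \<Rightarrow> effect \<Rightarrow> 'd \<Rightarrow> real" where
  "opstat P (E k y) x = P k y x"
| "opstat P Omega x = 1"
| "opstat P NullEff x = 0"

text \<open>Preparation densities: finitely supported probability weights on the preparations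
  S_x (x \<in> D).  Effect densities: probability weights on the (finitely many) effects.\<close>

definition prep_density :: "('d \<Rightarrow> real) \<Rightarrow> bool" where
  "prep_density p \<longleftrightarrow> finite {x. p x \<noteq> 0} \<and> (\<forall>x. p x \<ge> 0) \<and> sum p {x. p x \<noteq> 0} = 1"

definition eff_density :: "(effect \<Rightarrow> real) \<Rightarrow> bool" where
  "eff_density q \<longleftrightarrow> (\<forall>e. q e \<ge> 0) \<and> sum q UNIV = 1"

definition stat_dens :: "(task \<Rightarrow> label \<Rightarrow> 'd \<Rightarrow> real) \<Rightarrow> (effect \<Rightarrow> real) \<Rightarrow> ('d \<Rightarrow> real) \<Rightarrow> real" where
  "stat_dens P q p = (\<Sum>e\<in>UNIV. \<Sum>x\<in>{x. p x \<noteq> 0}. q e * p x * opstat P e x)"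

definition prep_equiv :: "(task \<Rightarrow> label \<Rightarrow> 'd \<Rightarrow> real) \<Rightarrow> ('d \<Rightarrow> real) \<Rightarrow> ('d \<Rightarrow> real) \<Rightarrow> bool" where
  "prep_equiv P p1 p2 \<longleftrightarrow>
     (\<forall>e. stat_dens P (\<lambda>e'. if e' = e then 1 else 0) p1 = stat_dens P (\<lambda>e'. if e' = e then 1 else 0) p2)"

definition eff_equiv :: "(task \<Rightarrow> label \<Rightarrow> 'd \<Rightarrow> real) \<Rightarrow> (effect \<Rightarrow> real) \<Rightarrow> (effect \<Rightarrow> real) \<Rightarrow> bool" where
  "eff_equiv P q1 q2 \<longleftrightarrow>
     (\<forall>x. stat_dens P q1 (\<lambda>x'. if x' = x then 1 else 0) = stat_dens P q2 (\<lambda>x'. if x' = x then 1 else 0))"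

definition mu_dens :: "('d \<Rightarrow> 'l \<Rightarrow> real) \<Rightarrow> ('d \<Rightarrow> real) \<Rightarrow> 'l \<Rightarrow> real" where
  "mu_dens \<mu> p l = (\<Sum>x\<in>{x. p x \<noteq> 0}. p x * \<mu> x l)"

definition xi_dens :: "(effect \<Rightarrow> 'l \<Rightarrow> real) \<Rightarrow> (effect \<Rightarrow> real) \<Rightarrow> 'l \<Rightarrow> real" where
  "xi_dens \<xi> q l = (\<Sum>e\<in>UNIV. q e * \<xi> e l)"

definition ontological_model ::
  "(task \<Rightarrow> label \<Rightarrow> 'd \<Rightarrow> real) \<Rightarrow> 'l measure \<Rightarrow> ('d \<Rightarrow> 'l \<Rightarrow> real) \<Rightarrow> (effect \<Rightarrow> 'l \<Rightarrow> real) \<Rightarrow> bool" where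
  "ontological_model P M \<mu> \<xi> \<longleftrightarrow>
     (\<forall>x. \<mu> x \<in> borel_measurable M \<and> (\<forall>l\<in>space M. \<mu> x l \<ge> 0) \<and>
          integrable M (\<mu> x) \<and> (\<integral>l. \<mu> x l \<partial>M) = 1) \<and>
     (\<forall>e. \<xi> e \<in> borel_measurable M \<and> (\<forall>l\<in>space M. 0 \<le> \<xi> e l \<and> \<xi> e l \<le> 1)) \<and>
     (\<forall>l\<in>space M. \<xi> Omega l = 1 \<and> \<xi> NullEff l = 0) \<and>
     (\<forall>e x. opstat P e x = (\<integral>l. \<mu> x l * \<xi> e l \<partial>M))"

definition noncontextual_model ::
  "(task \<Rightarrow> label \<Rightarrow> 'd \<Rightarrow> real) \<Rightarrow> 'l measure \<Rightarrow> ('d \<Rightarrow> 'l \<Rightarrow> real) \<Rightarrow> (effect \<Rightarrow> 'l \<Rightarrow> real) \<Rightarrow> bool" where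
  "noncontextual_model P M \<mu> \<xi> \<longleftrightarrow>
     ontological_model P M \<mu> \<xi> \<and>
     (\<forall>p1 p2. prep_density p1 \<and> prep_density p2 \<and> prep_equiv P p1 p2 \<longrightarrow>
        (\<forall>l\<in>space M. mu_dens \<mu> p1 l = mu_dens \<mu> p2 l)) \<and>
     (\<forall>q1 q2. eff_density q1 \<and> eff_density q2 \<and> eff_equiv P q1 q2 \<longrightarrow>
        (\<forall>l\<in>space M. xi_dens \<xi> q1 l = xi_dens \<xi> q2 l))"

text \<open>Since the
  ontic state space is an arbitrary measure space, the type 'l of ontic states is
  universally quantified at the theorem level.\<close>

definition contextual :: "(task \<Rightarrow> label \<Rightarrow> 'd \<Rightarrow> real) \<Rightarrow> 'l itself \<Rightarrow> bool" where
  "contextual P _ \<longleftrightarrow> \<not> (\<exists>(M :: 'l measure) \<mu> \<xi>. noncontextual_model P M \<mu> \<xi>)"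

definition Vset :: "(task \<Rightarrow> label \<Rightarrow> 'd \<Rightarrow> real) \<Rightarrow> (real \<times> real \<times> real) set" where
  "Vset P = (\<lambda>x. (P T1 Pos x, P T2 Pos x, P T3 Pos x)) ` UNIV"

definition vv :: "nat \<Rightarrow> real \<times> real \<times> real" where
  "vv i = (if i = 1 then (1, 0, 1/2) else if i = 2 then (0, 1, 1/2) else
           if i = 3 then (1/2, 1, 0) else if i = 4 then (1/2, 0, 1) else
           if i = 5 then (0, 1/2, 1) else (1, 1/2, 0))"

definition uu :: "real \<Rightarrow> nat \<Rightarrow> real \<times> real \<times> real" where
  "uu \<eta> i = \<eta> *\<^sub>R vv i + (1 - \<eta>) *\<^sub>R (1/2, 1/2, 1/2)"

definition V23 :: "(real \<times> real \<times> real) set" where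
  "V23 = convex hull (uu (2/3) ` {1..6})"

end

theory Submission
  imports Defs
begin

(* Suppose a noncontextual model exists and conv V contains the stretched hexagon uu eta i,
  realized by preparation densities rho i.  The mixtures (rho 1 + rho 2)/2, (rho 3 + rho 4)/2,
  (rho 5 + rho 6)/2 and (rho 1 + rho 3 + rho 5)/3 all have the statistics of the centre
  (1/2, 1/2, 1/2), so preparation noncontextuality gives them the same ontic distribution.
  Writing m i for the ontic distribution of rho i and X k for the response function of E k Pos,
  these linear relations bound
    Z = ((m 1 - m 2)(X 1 - X 2) + (m 3 - m 4)(X 2 - X 3) + (m 5 - m 6)(X 3 - X 1)) / 2
  pointwise by m 1 + m 2, whose integral is 2, whereas the operational statistics make the
  integral of Z equal to 3 eta.  Hence eta <= 2/3; but V23 lying in the relative interior of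
  conv V lets the hexagon be stretched beyond eta = 2/3. *)

definition dens_avg :: "('d \<Rightarrow> real) \<Rightarrow> ('d \<Rightarrow> real) \<Rightarrow> real" where
  "dens_avg p f = (\<Sum>x\<in>{x. p x \<noteq> 0}. p x * f x)"

definition dens_mix :: "real \<Rightarrow> ('d \<Rightarrow> real) \<Rightarrow> ('d \<Rightarrow> real) \<Rightarrow> 'd \<Rightarrow> real" where
  "dens_mix a p q = (\<lambda>x. a * p x + (1 - a) * q x)"

definition point_dens :: "'d \<Rightarrow> 'd \<Rightarrow> real" where
  "point_dens x = (\<lambda>x'. if x' = x then 1 else 0)"

lemma dens_avg_superset:
  assumes "finite F" "{x. p x \<noteq> 0} \<subseteq> F"
  shows "dens_avg p f = (\<Sum>x\<in>F. p x * f x)"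
  unfolding dens_avg_def by (rule sum.mono_neutral_left) (use assms in auto)

lemma dens_avg_one: "prep_density p \<Longrightarrow> dens_avg p (\<lambda>_. 1) = 1"
  unfolding dens_avg_def prep_density_def by simp

lemma dens_avg_diff: "dens_avg p (\<lambda>x. f x - g x) = dens_avg p f - dens_avg p g"
  unfolding dens_avg_def by (simp add: right_diff_distrib sum_subtractf)

lemma dens_avg_mix:
  assumes "prep_density p" "prep_density q"
  shows "dens_avg (dens_mix a p q) f = a * dens_avg p f + (1 - a) * dens_avg q f"
proof -
  let ?F = "{x. p x \<noteq> 0} \<union> {x. q x \<noteq> 0}"
  have fin: "finite ?F" using assms unfolding prep_density_def by auto
  have "dens_avg (dens_mix a p q) f = (\<Sum>x\<in>?F. a * (p x * f x) + (1 - a) * (q x * f x))"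
    by (subst dens_avg_superset[OF fin]) (auto simp: dens_mix_def algebra_simps)
  also have "\<dots> = a * dens_avg p f + (1 - a) * dens_avg q f"
    by (simp add: sum.distrib sum_distrib_left dens_avg_superset[OF fin])
  finally show ?thesis .
qed

lemma prep_density_mix:
  assumes "prep_density p" "prep_density q" "0 \<le> a" "a \<le> 1"
  shows "prep_density (dens_mix a p q)"
proof -
  have "{x. dens_mix a p q x \<noteq> 0} \<subseteq> {x. p x \<noteq> 0} \<union> {x. q x \<noteq> 0}"
    unfolding dens_mix_def by auto
  then have "finite {x. dens_mix a p q x \<noteq> 0}"
    using assms(1,2) finite_subset unfolding prep_density_def by auto
  moreover have "\<forall>x. dens_mix a p q x \<ge> 0"
    using assms unfolding prep_density_def dens_mix_def by auto
  moreover have "sum (dens_mix a p q) {x. dens_mix a p q x \<noteq> 0} = 1"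
    using dens_avg_mix[OF assms(1,2), of a "\<lambda>_. 1"]
      dens_avg_one[OF assms(1)] dens_avg_one[OF assms(2)]
    by (simp add: dens_avg_def)
  ultimately show ?thesis unfolding prep_density_def by blast
qed

lemma prep_density_point_dens: "prep_density (point_dens x)"
  and dens_avg_point_dens: "dens_avg (point_dens x) f = f x"
proof -
  have supp: "{x'. point_dens x x' \<noteq> 0} = {x}" unfolding point_dens_def by auto
  show "prep_density (point_dens x)" "dens_avg (point_dens x) f = f x"
    unfolding prep_density_def dens_avg_def supp by (simp_all add: point_dens_def)
qed

definition pos_avgs :: "(task \<Rightarrow> label \<Rightarrow> 'd \<Rightarrow> real) \<Rightarrow> ('d \<Rightarrow> real) \<Rightarrow> real \<times> real \<times> real" where
  "pos_avgs P p = (dens_avg p (P T1 Pos), dens_avg p (P T2 Pos), dens_avg p (P T3 Pos))"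

lemma pos_avgs_mix:
  "prep_density p \<Longrightarrow> prep_density q \<Longrightarrow>
    pos_avgs P (dens_mix a p q) = a *\<^sub>R pos_avgs P p + (1 - a) *\<^sub>R pos_avgs P q"
  unfolding pos_avgs_def by (simp add: dens_avg_mix)

lemma convex_hull_Vset_subset_pos_avgs:
  "convex hull (Vset P) \<subseteq> pos_avgs P ` Collect prep_density"
proof (rule hull_minimal)
  have "(P T1 Pos x, P T2 Pos x, P T3 Pos x) \<in> pos_avgs P ` Collect prep_density" for x
  proof
    show "(P T1 Pos x, P T2 Pos x, P T3 Pos x) = pos_avgs P (point_dens x)"
      unfolding pos_avgs_def dens_avg_point_dens ..
  qed (simp add: prep_density_point_dens)
  then show "Vset P \<subseteq> pos_avgs P ` Collect prep_density"
    unfolding Vset_def by blast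
  show "convex (pos_avgs P ` Collect prep_density)"
  proof (rule convexI)
    fix y z :: "real \<times> real \<times> real" and u v :: real
    assume "y \<in> pos_avgs P ` Collect prep_density" "z \<in> pos_avgs P ` Collect prep_density"
      and uv: "0 \<le> u" "0 \<le> v" "u + v = 1"
    then obtain p q where "prep_density p" "prep_density q" "y = pos_avgs P p" "z = pos_avgs P q"
      by auto
    moreover from uv have "v = 1 - u" "u \<le> 1" by auto
    ultimately have "u *\<^sub>R y + v *\<^sub>R z = pos_avgs P (dens_mix u p q)"
      and "prep_density (dens_mix u p q)"
      using uv(1) by (simp_all add: pos_avgs_mix prep_density_mix)
    then show "u *\<^sub>R y + v *\<^sub>R z \<in> pos_avgs P ` Collect prep_density" by simp
  qed
qed

lemma opstat_eq:
  "opstat P (E k y) = P k y" "opstat P Omega = (\<lambda>_. 1)" "opstat P NullEff = (\<lambda>_. 0)"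
  by (rule ext, simp)+

lemma stat_dens_single_effect:
  "stat_dens P (\<lambda>e'. if e' = e then 1 else 0) p = dens_avg p (opstat P e)"
proof -
  have "(\<Sum>x\<in>{x. p x \<noteq> 0}. (if e' = e then 1 else 0) * p x * opstat P e' x)
      = (if e' = e then dens_avg p (opstat P e) else 0)" for e'
    unfolding dens_avg_def by auto
  then show ?thesis unfolding stat_dens_def by simp
qed

lemma prep_equiv_if_pos_avgs_eq:
  assumes "multitask_model P" "prep_density p" "prep_density q"
    and "pos_avgs P p = pos_avgs P q"
  shows "prep_equiv P p q"
  unfolding prep_equiv_def stat_dens_single_effect
proof
  fix e
  have Pos: "dens_avg p (P k Pos) = dens_avg q (P k Pos)" for k
    using assms(4) unfolding pos_avgs_def by (cases k) auto
  have "P k Neg = (\<lambda>x. 1 - P k Pos x)" for k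
    using assms(1) unfolding multitask_model_def by (auto simp: algebra_simps)
  then have Neg: "dens_avg r (P k Neg) = 1 - dens_avg r (P k Pos)" if "prep_density r" for r k
    using dens_avg_diff[of r "\<lambda>_. 1"] dens_avg_one[OF that] by simp
  show "dens_avg p (opstat P e) = dens_avg q (opstat P e)"
  proof (cases e)
    case (E k y)
    then show ?thesis
      using Pos Neg[OF assms(2)] Neg[OF assms(3)] by (cases y) (simp_all add: opstat_eq)
  next
    case Omega
    then show ?thesis using assms(2,3) by (simp add: opstat_eq dens_avg_one)
  next
    case NullEff
    then show ?thesis by (simp add: opstat_eq dens_avg_def)
  qed
qed

lemma mu_dens_mix:
  "prep_density p \<Longrightarrow> prep_density q \<Longrightarrow>
    mu_dens \<mu> (dens_mix a p q) l = a * mu_dens \<mu> p l + (1 - a) * mu_dens \<mu> q l"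
  unfolding mu_dens_def dens_avg_def[symmetric] by (rule dens_avg_mix)

context
  fixes P :: "task \<Rightarrow> label \<Rightarrow> 'd \<Rightarrow> real" and M :: "'l measure"
    and \<mu> :: "'d \<Rightarrow> 'l \<Rightarrow> real" and \<xi> :: "effect \<Rightarrow> 'l \<Rightarrow> real"
  assumes model: "ontological_model P M \<mu> \<xi>"
begin

lemma integrable_mu: "integrable M (\<mu> x)"
  and integral_mu: "(\<integral>l. \<mu> x l \<partial>M) = 1"
  and mu_nonneg: "l \<in> space M \<Longrightarrow> 0 \<le> \<mu> x l"
  and xi_bounded: "l \<in> space M \<Longrightarrow> 0 \<le> \<xi> e l \<and> \<xi> e l \<le> 1"
  and integral_mu_xi: "(\<integral>l. \<mu> x l * \<xi> e l \<partial>M) = opstat P e x"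
  using model unfolding ontological_model_def by auto

lemma integrable_mu_xi: "integrable M (\<lambda>l. \<mu> x l * \<xi> e l)"
proof (rule Bochner_Integration.integrable_bound[OF integrable_mu])
  have "\<mu> x \<in> borel_measurable M" "\<xi> e \<in> borel_measurable M"
    using model unfolding ontological_model_def by blast+
  then show "(\<lambda>l. \<mu> x l * \<xi> e l) \<in> borel_measurable M" by measurable
  show "AE l in M. norm (\<mu> x l * \<xi> e l) \<le> norm (\<mu> x l)"
    using mu_nonneg xi_bounded by (intro AE_I2) (simp add: abs_mult mult_left_le)
qed

lemma mu_dens_nonneg: "prep_density p \<Longrightarrow> l \<in> space M \<Longrightarrow> 0 \<le> mu_dens \<mu> p l"
  unfolding mu_dens_def prep_density_def using mu_nonneg by (auto intro!: sum_nonneg)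

lemma integrable_mu_dens: "integrable M (mu_dens \<mu> p)"
  unfolding mu_dens_def using integrable_mu by auto

lemma integral_mu_dens: "prep_density p \<Longrightarrow> (\<integral>l. mu_dens \<mu> p l \<partial>M) = 1"
  unfolding mu_dens_def prep_density_def
  by (simp add: integrable_mu integral_mu Bochner_Integration.integral_sum)

lemma mu_dens_mult_xi: "mu_dens \<mu> p l * \<xi> e l = (\<Sum>x\<in>{x. p x \<noteq> 0}. p x * (\<mu> x l * \<xi> e l))"
  unfolding mu_dens_def by (simp add: sum_distrib_right mult.assoc)

lemma integrable_mu_dens_xi: "integrable M (\<lambda>l. mu_dens \<mu> p l * \<xi> e l)"
  unfolding mu_dens_mult_xi using integrable_mu_xi by auto

lemma integral_mu_dens_xi: "(\<integral>l. mu_dens \<mu> p l * \<xi> e l \<partial>M) = dens_avg p (opstat P e)"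
  unfolding mu_dens_mult_xi dens_avg_def
  by (simp add: integrable_mu_xi integral_mu_xi Bochner_Integration.integral_sum)

end

lemma noncontextual_mu_dens_eq:
  assumes "noncontextual_model P M \<mu> \<xi>" "multitask_model P"
    and "prep_density p" "prep_density q" "pos_avgs P p = pos_avgs P q" "l \<in> space M"
  shows "mu_dens \<mu> p l = mu_dens \<mu> q l"
  using assms prep_equiv_if_pos_avgs_eq unfolding noncontextual_model_def by blast

lemma mult_centered_le_half_abs:
  fixes x y :: real
  assumes "0 \<le> x" "x \<le> 1"
  shows "y * (x - 1/2) \<le> \<bar>y\<bar> / 2"
proof -
  have "\<bar>x - 1/2\<bar> \<le> 1/2" using assms by arith
  then have "\<bar>y\<bar> * \<bar>x - 1/2\<bar> \<le> \<bar>y\<bar> * (1/2)" by (rule mult_left_mono) simp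
  then show ?thesis by (simp add: abs_mult[symmetric])
qed

lemma hexagon_pointwise_bound:
  fixes m1 m2 m3 m4 m5 m6 x1 x2 x3 :: real
  assumes "0 \<le> m1" "0 \<le> m2" "0 \<le> m3" "0 \<le> m4" "0 \<le> m5" "0 \<le> m6"
    and "0 \<le> x1" "x1 \<le> 1" "0 \<le> x2" "x2 \<le> 1" "0 \<le> x3" "x3 \<le> 1"
    and "m1 + m2 = m3 + m4" "m1 + m2 = m5 + m6" "3 * (m1 + m2) = 2 * (m1 + m3 + m5)"
  shows "((m1 - m2) * (x1 - x2) + (m3 - m4) * (x2 - x3) + (m5 - m6) * (x3 - x1)) / 2 \<le> m1 + m2"
proof -
  define A B C where "A = m1 - m2" and "B = m3 - m4" and "C = m5 - m6"
  have "A + B + C = 0"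
    unfolding A_def B_def C_def using assms(13-15) by argo
  moreover have "\<bar>A\<bar> \<le> m1 + m2" "\<bar>B\<bar> \<le> m1 + m2" "\<bar>C\<bar> \<le> m1 + m2"
    unfolding A_def B_def C_def using assms(1-6,13,14) by auto
  ultimately have "\<bar>A - C\<bar> + \<bar>B - A\<bar> + \<bar>C - B\<bar> \<le> 4 * (m1 + m2)" by argo
  moreover have "(m1 - m2) * (x1 - x2) + (m3 - m4) * (x2 - x3) + (m5 - m6) * (x3 - x1)
      = (A - C) * (x1 - 1/2) + (B - A) * (x2 - 1/2) + (C - B) * (x3 - 1/2)"
    unfolding A_def B_def C_def by algebra
  moreover have "(A - C) * (x1 - 1/2) \<le> \<bar>A - C\<bar> / 2"
    "(B - A) * (x2 - 1/2) \<le> \<bar>B - A\<bar> / 2" "(C - B) * (x3 - 1/2) \<le> \<bar>C - B\<bar> / 2"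
    by (rule mult_centered_le_half_abs[OF assms(7,8)] mult_centered_le_half_abs[OF assms(9,10)]
        mult_centered_le_half_abs[OF assms(11,12)])+
  ultimately show ?thesis by argo
qed

lemma convex_stretch_mono:
  fixes S :: "'a::real_vector set" and t e :: real
  assumes "convex S" "c \<in> S" "(1 - t) *\<^sub>R c + t *\<^sub>R a \<in> S" "0 \<le> e" "e \<le> t"
  shows "(1 - e) *\<^sub>R c + e *\<^sub>R a \<in> S"
proof (cases "t = 0")
  case True
  with assms show ?thesis by simp
next
  case False
  then have "(1 - e / t) *\<^sub>R c + (e / t) *\<^sub>R ((1 - t) *\<^sub>R c + t *\<^sub>R a) \<in> S"
    using assms by (intro convexD[OF assms(1-3)]) (auto simp: field_split_simps)
  also have "(1 - e / t) *\<^sub>R c + (e / t) *\<^sub>R ((1 - t) *\<^sub>R c + t *\<^sub>R a) = (1 - e) *\<^sub>R c + e *\<^sub>R a"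
    using False by (simp add: algebra_simps)
  finally show ?thesis .
qed

lemma convex_rel_interior_finite_stretch:
  fixes S :: "'a::euclidean_space set"
  assumes "convex S" "c \<in> S" "finite A" "A \<subseteq> rel_interior S"
  shows "\<exists>e>1. \<forall>a\<in>A. (1 - e) *\<^sub>R c + e *\<^sub>R a \<in> S"
  using assms(3,4)
proof (induction A rule: finite_induct)
  case empty
  show ?case by (intro exI[of _ 2]) simp
next
  case (insert a A)
  then obtain e1 where e1: "e1 > 1" "\<forall>b\<in>A. (1 - e1) *\<^sub>R c + e1 *\<^sub>R b \<in> S" by auto
  obtain e2 where e2: "e2 > 1" "(1 - e2) *\<^sub>R c + e2 *\<^sub>R a \<in> S"
    using insert.prems assms(1,2) convex_rel_interior_iff[of S a] by auto
  have "(1 - min e1 e2) *\<^sub>R c + min e1 e2 *\<^sub>R b \<in> S" if "b \<in> insert a A" for b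
    using that e1 e2 convex_stretch_mono[OF assms(1,2)] by auto
  then show ?case using e1 e2 by (intro exI[of _ "min e1 e2"]) auto
qed

lemma uu_stretch: "(1 - e) *\<^sub>R (1/2, 1/2, 1/2) + e *\<^sub>R uu \<eta> i = uu (e * \<eta>) i"
  unfolding uu_def by (simp add: algebra_simps field_simps)

lemma noncontextual_hexagon_mu_dens_relations:
  assumes nc: "noncontextual_model P M \<mu> \<xi>" and mm: "multitask_model P"
    and dens: "\<And>i. i \<in> {1..6} \<Longrightarrow> prep_density (rho i)"
    and avgs: "\<And>i. i \<in> {1..6} \<Longrightarrow> pos_avgs P (rho i) = uu \<eta> i"
    and l: "l \<in> space M"
  defines "m i \<equiv> mu_dens \<mu> (rho i) l"
  shows "m 1 + m 2 = m 3 + m 4" "m 1 + m 2 = m 5 + m 6" "3 * (m 1 + m 2) = 2 * (m 1 + m 3 + m 5)"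
proof -
  note mix_simps = dens avgs prep_density_mix pos_avgs_mix uu_def vv_def field_simps
  have centre: "mu_dens \<mu> p l = mu_dens \<mu> (dens_mix (1/2) (rho 1) (rho 2)) l"
    if "prep_density p" "pos_avgs P p = (1/2, 1/2, 1/2)" for p
    by (rule noncontextual_mu_dens_eq[OF nc mm that(1) _ _ l])
      (simp_all add: that(2) mix_simps)
  have "mu_dens \<mu> (dens_mix (1/2) (rho 3) (rho 4)) l = mu_dens \<mu> (dens_mix (1/2) (rho 1) (rho 2)) l"
    by (rule centre) (simp_all add: mix_simps)
  then show "m 1 + m 2 = m 3 + m 4"
    by (simp add: m_def dens mu_dens_mix)
  have "mu_dens \<mu> (dens_mix (1/2) (rho 5) (rho 6)) l = mu_dens \<mu> (dens_mix (1/2) (rho 1) (rho 2)) l"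
    by (rule centre) (simp_all add: mix_simps)
  then show "m 1 + m 2 = m 5 + m 6"
    by (simp add: m_def dens mu_dens_mix)
  have "prep_density (dens_mix (1/2) (rho 1) (rho 3))"
    by (simp add: dens prep_density_mix)
  then have "mu_dens \<mu> (dens_mix (2/3) (dens_mix (1/2) (rho 1) (rho 3)) (rho 5)) l
      = mu_dens \<mu> (dens_mix (1/2) (rho 1) (rho 2)) l"
    by (intro centre) (simp_all add: mix_simps)
  then show "3 * (m 1 + m 2) = 2 * (m 1 + m 3 + m 5)"
    by (simp add: m_def dens mu_dens_mix prep_density_mix) argo
qed

lemma noncontextual_hexagon_bound:
  assumes nc: "noncontextual_model P M \<mu> \<xi>" and mm: "multitask_model P"
    and hull: "\<And>i. i \<in> {1..6} \<Longrightarrow> uu \<eta> i \<in> convex hull (Vset P)"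
  shows "\<eta> \<le> 2/3"
proof -
  have model: "ontological_model P M \<mu> \<xi>"
    using nc unfolding noncontextual_model_def by blast
  have "\<forall>i\<in>{1..6}. \<exists>p. prep_density p \<and> pos_avgs P p = uu \<eta> i"
    using hull convex_hull_Vset_subset_pos_avgs by fastforce
  then obtain rho where dens: "\<And>i. i \<in> {1..6} \<Longrightarrow> prep_density (rho i)"
    and avgs: "\<And>i. i \<in> {1..6} \<Longrightarrow> pos_avgs P (rho i) = uu \<eta> i"
    by metis
  define m where "m i l = mu_dens \<mu> (rho i) l" for i l
  define X where "X k l = \<xi> (E k Pos) l" for k l
  define Z where "Z l = ((m 1 l - m 2 l) * (X T1 l - X T2 l) + (m 3 l - m 4 l) * (X T2 l - X T3 l)
      + (m 5 l - m 6 l) * (X T3 l - X T1 l)) / 2" for l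
  have Z_le: "Z l \<le> m 1 l + m 2 l" if l: "l \<in> space M" for l
    unfolding Z_def m_def X_def
    using noncontextual_hexagon_mu_dens_relations[OF nc mm dens avgs l]
      mu_dens_nonneg[OF model dens l] xi_bounded[OF model l]
    by (intro hexagon_pointwise_bound) auto
  have Z_expand: "Z = (\<lambda>l. (1/2) * ((m 1 l * X T1 l - m 1 l * X T2 l) - (m 2 l * X T1 l - m 2 l * X T2 l)
      + (m 3 l * X T2 l - m 3 l * X T3 l) - (m 4 l * X T2 l - m 4 l * X T3 l)
      + (m 5 l * X T3 l - m 5 l * X T1 l) - (m 6 l * X T3 l - m 6 l * X T1 l)))"
    unfolding Z_def by (rule ext) (simp add: algebra_simps divide_simps)
  have integrable_mX: "integrable M (\<lambda>l. m i l * X k l)" for i k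
    unfolding m_def X_def by (rule integrable_mu_dens_xi[OF model])
  have integral_mX: "(\<integral>l. m i l * X k l \<partial>M) = dens_avg (rho i) (P k Pos)" for i k
    unfolding m_def X_def integral_mu_dens_xi[OF model] opstat_eq ..
  have "dens_avg (rho i) (P T1 Pos) = fst (uu \<eta> i)" "dens_avg (rho i) (P T2 Pos) = fst (snd (uu \<eta> i))"
    "dens_avg (rho i) (P T3 Pos) = snd (snd (uu \<eta> i))" if "i \<in> {1..6}" for i
    using avgs[OF that, symmetric] unfolding pos_avgs_def by simp_all
  then have "3 * \<eta> = (\<integral>l. Z l \<partial>M)"
    unfolding Z_expand using integrable_mX by (simp add: integral_mX uu_def vv_def)
  also have "\<dots> \<le> (\<integral>l. m 1 l + m 2 l \<partial>M)"
  proof (rule integral_mono)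
    show "integrable M Z"
      unfolding Z_expand using integrable_mX by simp
    show "integrable M (\<lambda>l. m 1 l + m 2 l)"
      unfolding m_def using integrable_mu_dens[OF model] by simp
  qed (rule Z_le)
  also have "\<dots> = 2"
    unfolding m_def using integrable_mu_dens[OF model] integral_mu_dens[OF model] dens by simp
  finally show ?thesis by simp
qed

lemma stretched_hexagon_if_V23_rel_interior:
  fixes K :: "(real \<times> real \<times> real) set"
  assumes "convex K" "V23 \<subseteq> rel_interior K"
  shows "\<exists>\<eta>>2/3. \<forall>i\<in>{1..6}. uu \<eta> i \<in> K"
proof -
  have inner: "uu (2/3) ` {1..6} \<subseteq> rel_interior K"
    using hull_subset[of "uu (2/3) ` {1..6}" convex] assms(2) unfolding V23_def by (rule order_trans)
  have vertex: "uu (2/3) i \<in> K" if "i \<in> {1..6}" for i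
    using subsetD[OF inner imageI[OF that]] rel_interior_subset by blast
  have "(1/2) *\<^sub>R uu (2/3) 1 + (1/2) *\<^sub>R uu (2/3) 2 \<in> K"
    by (rule convexD[OF assms(1) vertex vertex]) simp_all
  then have centre: "(1/2, 1/2, 1/2) \<in> K"
    by (simp add: uu_def vv_def)
  obtain e :: real where "e > 1"
    and stretch: "\<forall>a\<in>uu (2/3) ` {1..6}. (1 - e) *\<^sub>R (1/2, 1/2, 1/2) + e *\<^sub>R a \<in> K"
    using convex_rel_interior_finite_stretch[OF assms(1) centre _ inner] by blast
  then have "\<forall>i\<in>{1..6}. uu (e * (2/3)) i \<in> K"
    unfolding uu_stretch[symmetric] by blast
  moreover have "e * (2/3) > 2/3" using \<open>e > 1\<close> by simp
  ultimately show ?thesis by blast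
qed

theorem theorem1:
  fixes P :: "task \<Rightarrow> label \<Rightarrow> 'd \<Rightarrow> real"
  assumes "multitask_model P"
    and "\<forall>x. P T1 Pos x + P T2 Pos x + P T3 Pos x = 3/2"
    and "V23 \<subseteq> rel_interior (convex hull (Vset P))"
  shows "contextual P TYPE('l)"
  unfolding contextual_def
proof
  assume "\<exists>(M :: 'l measure) \<mu> \<xi>. noncontextual_model P M \<mu> \<xi>"
  then obtain M :: "'l measure" and \<mu> \<xi> where nc: "noncontextual_model P M \<mu> \<xi>" by blast
  obtain \<eta> where "\<eta> > 2/3" "\<forall>i\<in>{1..6}. uu \<eta> i \<in> convex hull (Vset P)"
    using stretched_hexagon_if_V23_rel_interior[OF convex_convex_hull assms(3)] by blast
  moreover from this(2) have "\<eta> \<le> 2/3"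
    by (intro noncontextual_hexagon_bound[OF nc assms(1)]) blast
  ultimately show False by simp
qed

end
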